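(* Let $\Gamma$ and $\Phi_\Gamma$ be one of the following pairs: (a) $\Gamma=\Gamma(m,1)$ acting on one variable $x$ by $x\mapsto \eta x$ ($\eta$ a primitive $m$-th root of unity, $m\ge 2$), with $\Phi_\Gamma=x^m$; (b) $\Gamma=\Gamma(m,1)$ acting on two variables by $(x,y)\mapsto(\eta x,\eta y)$, with $\Phi_\Gamma=(x+y)^m$; (c) $\Gamma=\Gamma(2r+1,2)$ ($r\ge1$) acting by $(x,y)\mapsto(\eta x,\eta^2y)$ with $\eta$ a primitive $(2r+1)$-th root of unity, with $\Phi_\Gamma=f_{2r+1}(x,y)=x^{2r+1}+y^{2r+1}+\sum_{j=1}^r c(r,j)x^{2r+1-2j}y^j$, where $c(r,j)=\frac{2r+1}{j}\binom{2r-j}{j-1}$; (d) $\Gamma=\Gamma(7)$ acting by $(x,y,z)\mapsto(\eta x,\eta^2y,\eta^4z)$ with $\eta$ a primitive $7$-th root of unity, with $\Phi_\Gamma=F$ given by $F= x^7 + y^7 + z^7 + 14(x^3 y^2 + x^2 z^3 + y^3 z^2 + xyz) + 7(x^5 y + x z^5 + y^5 z + x y^3 + x^3 z + y z^3) + 7( x y^2 z^4 + x^2 y^4 z + x^4 y z^2 + x^2 y^2 z^2)$. Assume $G$ is a $\Gamma$-special polynomial. Then there is a $\Gamma$-invariant polynomial $H$ such that $G=\Phi_\Gamma-H+H\cdot\Phi_\Gamma$.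
   Context: A real polynomial $G$ is $\Gamma$-invariant if $G(\gamma\mathbf{x})=G(\mathbf{x})$ for all $\gamma\in\Gamma$ (the action being as described for each case). $G$ is $\Gamma$-special if it is $\Gamma$-invariant, has only non-negative coefficients, has zero constant term, and equals $1$ on the relevant set: at $x=1$ in case (a), on the line $x+y=1$ in cases (b),(c), and on the plane $x+y+z=1$ in case (d). *)

theory Defs
  imports Complex_Main "HOL-Library.Poly_Mapping"
begin

text \<open>Real polynomials in the variables X_0, X_1, X_2, ... represented as finitely
supported maps from monomials (exponent vectors) to real coefficients.\<close>

type_synonym mpoly = "(nat \<Rightarrow>\<^sub>0 nat) \<Rightarrow>\<^sub>0 real"

definition Var :: "nat \<Rightarrow> mpoly" where
  "Var i = Poly_Mapping.single (Poly_Mapping.single i 1) 1"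

definition Const :: "real \<Rightarrow> mpoly" where
  "Const c = Poly_Mapping.single 0 c"

definition vars :: "mpoly \<Rightarrow> nat set" where
  "vars p = (\<Union>m\<in>Poly_Mapping.keys p. Poly_Mapping.keys m)"

definition eval :: "mpoly \<Rightarrow> (nat \<Rightarrow> 'a::{real_algebra_1,comm_ring_1}) \<Rightarrow> 'a" where
  "eval p x = (\<Sum>mon\<in>Poly_Mapping.keys p.
      of_real (Poly_Mapping.lookup p mon) *
      (\<Prod>i\<in>Poly_Mapping.keys (mon :: nat \<Rightarrow>\<^sub>0 nat). x i ^ Poly_Mapping.lookup mon i))"

text \<open>Invariance under the cyclic group of order n generated by
  (x_i) \<mapsto> (eta^(a i) x_i), eta = exp(2 pi i/n) a primitive n-th root of unity.\<close>
definition invariant :: "nat \<Rightarrow> (nat \<Rightarrow> nat) \<Rightarrow> mpoly \<Rightarrow> bool" where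
  "invariant n a G \<longleftrightarrow>
     (\<forall>j::nat. \<forall>x::nat \<Rightarrow> complex.
        eval G (\<lambda>i. (cis (2 * pi / real n)) ^ (j * a i) * x i) = eval G x)"

text \<open>Gamma-special polynomial in the k variables X_0..X_(k-1): invariant,
  non-negative coefficients, zero constant term, equal to 1 on the hyperplane
  X_0 + ... + X_(k-1) = 1 (for k = 1 this is the point X_0 = 1).\<close>
definition special :: "nat \<Rightarrow> nat \<Rightarrow> (nat \<Rightarrow> nat) \<Rightarrow> mpoly \<Rightarrow> bool" where
  "special k n a G \<longleftrightarrow>
     vars G \<subseteq> {..<k} \<and> invariant n a G \<and>
     (\<forall>m. Poly_Mapping.lookup G m \<ge> 0) \<and> Poly_Mapping.lookup G 0 = 0 \<and>
     (\<forall>x::nat \<Rightarrow> real. (\<Sum>i<k. x i) = 1 \<longrightarrow> eval G x = 1)"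

definition cc :: "nat \<Rightarrow> nat \<Rightarrow> real" where
  "cc r j = real (2*r+1) / real j * real ((2*r - j) choose (j - 1))"

definition f_odd :: "nat \<Rightarrow> mpoly" where
  "f_odd r = Var 0 ^ (2*r+1) + Var 1 ^ (2*r+1)
     + (\<Sum>j=1..r. Const (cc r j) * Var 0 ^ (2*r+1-2*j) * Var 1 ^ j)"

definition Klein_F :: mpoly where
  "Klein_F = (let x = Var 0; y = Var 1; z = Var 2 in
     x^7 + y^7 + z^7
     + Const 14 * (x^3*y^2 + x^2*z^3 + y^3*z^2 + x*y*z)
     + Const 7 * (x^5*y + x*z^5 + y^5*z + x*y^3 + x^3*z + y*z^3)
     + Const 7 * (x*y^2*z^4 + x^2*y^4*z + x^4*y*z^2 + x^2*y^2*z^2))"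

end

theory Submission
  imports Defs "HOL-Number_Theory.Cong"
begin

(* Write Phi = 1 + X_k^n + L with L of degree < n in the last variable X_k.  A special G equals 1
   on the real hyperplane x_0 + ... + x_k = 1, so G - 1 is divisible by x_0 + ... + x_k - 1 and
   G = 1 on the complex hyperplane as well; by invariance G and Phi equal 1 on its n images under
   the group.  Dividing G - 1 by Phi - 1, which is monic in X_k, leaves a remainder of X_k-degree
   < n.  A line parallel to the X_k-axis meets the n image hyperplanes in n distinct points (for
   all but finitely many lines in a suitable pencil, which suffices by continuity), and the
   remainder vanishes there, so it is zero.  Hence G = 1 + Q (Phi - 1), i.e. G = Phi - H + H Phi
   with H = Q - 1, and Q is invariant because Phi - 1 has only finitely many zeros on each such
   line.  For Phi = f_(2r+1) the value 1 on x + y = 1 is Waring's formula for a^N + b^N in terms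
   of a + b and ab, applied to a = 1, b = -y. *)

section \<open>Evaluation and variables of polynomials\<close>

definition eval_monomial :: "(nat \<Rightarrow>\<^sub>0 nat) \<Rightarrow> (nat \<Rightarrow> 'a::comm_ring_1) \<Rightarrow> 'a" where
  "eval_monomial m x = (\<Prod>i\<in>Poly_Mapping.keys m. x i ^ Poly_Mapping.lookup m i)"

lemma eval_monomial_superset:
  assumes "finite S" "Poly_Mapping.keys m \<subseteq> S"
  shows "eval_monomial m x = (\<Prod>i\<in>S. x i ^ Poly_Mapping.lookup m i)"
  unfolding eval_monomial_def
  by (rule prod.mono_neutral_left) (use assms in \<open>auto simp: in_keys_iff\<close>)

lemma eval_monomial_0 [simp]: "eval_monomial 0 x = 1"
  by (simp add: eval_monomial_def)

lemma eval_monomial_add: "eval_monomial (a + b) x = eval_monomial a x * eval_monomial b x"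
proof -
  let ?S = "Poly_Mapping.keys a \<union> Poly_Mapping.keys b"
  have "eval_monomial (a + b) x = (\<Prod>i\<in>?S. x i ^ Poly_Mapping.lookup (a + b) i)"
    by (rule eval_monomial_superset) (auto dest: set_mp[OF keys_add])
  also have "\<dots> = (\<Prod>i\<in>?S. x i ^ Poly_Mapping.lookup a i) * (\<Prod>i\<in>?S. x i ^ Poly_Mapping.lookup b i)"
    by (simp add: lookup_add power_add prod.distrib)
  also have "\<dots> = eval_monomial a x * eval_monomial b x"
    by (simp add: eval_monomial_superset[symmetric])
  finally show ?thesis .
qed

lemma eval_eq_sum_monomials:
  "eval p x = (\<Sum>m\<in>Poly_Mapping.keys p. of_real (Poly_Mapping.lookup p m) * eval_monomial m x)"
  unfolding eval_def eval_monomial_def ..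

lemma eval_superset:
  assumes "finite S" "Poly_Mapping.keys p \<subseteq> S"
  shows "eval p x = (\<Sum>m\<in>S. of_real (Poly_Mapping.lookup p m) * eval_monomial m x)"
  unfolding eval_eq_sum_monomials
  by (rule sum.mono_neutral_left) (use assms in \<open>auto simp: in_keys_iff\<close>)

lemma eval_single: "eval (Poly_Mapping.single m c) x = of_real c * eval_monomial m x"
  by (simp add: eval_eq_sum_monomials)

lemma eval_0 [simp]: "eval 0 x = 0"
  by (simp add: eval_def)

lemma eval_1 [simp]: "eval 1 x = 1"
  by (simp add: eval_eq_sum_monomials)

lemma eval_Var [simp]: "eval (Var i) x = x i"
  by (simp add: Var_def eval_single eval_monomial_def)

lemma eval_Const [simp]: "eval (Const c) x = of_real c"
  by (simp add: Const_def eval_single)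

lemma eval_add [simp]: "eval (p + q) x = eval p x + eval q x"
proof -
  let ?S = "Poly_Mapping.keys p \<union> Poly_Mapping.keys q"
  have "eval (p + q) x = (\<Sum>m\<in>?S. of_real (Poly_Mapping.lookup (p + q) m) * eval_monomial m x)"
    by (rule eval_superset) (auto dest: set_mp[OF keys_add])
  also have "\<dots> = (\<Sum>m\<in>?S. of_real (Poly_Mapping.lookup p m) * eval_monomial m x)
      + (\<Sum>m\<in>?S. of_real (Poly_Mapping.lookup q m) * eval_monomial m x)"
    by (simp add: lookup_add distrib_right sum.distrib)
  also have "\<dots> = eval p x + eval q x"
    by (simp add: eval_superset[symmetric])
  finally show ?thesis .
qed

lemma eval_uminus [simp]: "eval (- p) x = - eval p x"
  by (simp add: eval_def sum_negf)

lemma eval_diff [simp]: "eval (p - q) x = eval p x - eval q x"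
  using eval_add[of p "- q" x] by simp

lemma eval_sum [simp]: "eval (sum f A) x = (\<Sum>a\<in>A. eval (f a) x)"
  by (induction A rule: infinite_finite_induct) auto

lemma poly_mapping_eq_sum_single:
  "p = (\<Sum>m\<in>Poly_Mapping.keys p. Poly_Mapping.single m (Poly_Mapping.lookup p m))"
  by (rule poly_mapping_eqI) (simp add: lookup_sum lookup_single when_def in_keys_iff sum.delta)

lemma eval_mult [simp]: "eval (p * q) x = eval p x * eval q x"
proof -
  have "p * q = (\<Sum>a\<in>Poly_Mapping.keys p. \<Sum>b\<in>Poly_Mapping.keys q.
      Poly_Mapping.single a (Poly_Mapping.lookup p a) * Poly_Mapping.single b (Poly_Mapping.lookup q b))"
    by (subst poly_mapping_eq_sum_single[of p], subst poly_mapping_eq_sum_single[of q])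
      (simp add: sum_product)
  then have "eval (p * q) x = (\<Sum>a\<in>Poly_Mapping.keys p. \<Sum>b\<in>Poly_Mapping.keys q.
      of_real (Poly_Mapping.lookup p a) * eval_monomial a x *
      (of_real (Poly_Mapping.lookup q b) * eval_monomial b x))"
    by (simp add: mult_single eval_single eval_monomial_add mult_ac)
  also have "\<dots> = eval p x * eval q x"
    by (simp add: eval_eq_sum_monomials sum_product)
  finally show ?thesis .
qed

lemma eval_power [simp]: "eval (p ^ n) x = eval p x ^ n"
  by (induction n) auto

lemma eval_cong:
  assumes "\<And>i. i \<in> vars p \<Longrightarrow> x i = y i"
  shows "eval p x = eval p y"
  unfolding eval_def
proof (intro sum.cong refl arg_cong2[where f = "(*)"] prod.cong)
  fix m i
  assume "m \<in> Poly_Mapping.keys p" "i \<in> Poly_Mapping.keys m"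
  then have "i \<in> vars p" by (auto simp: vars_def)
  then show "x i ^ Poly_Mapping.lookup m i = y i ^ Poly_Mapping.lookup m i"
    using assms by simp
qed

lemma eval_fun_upd_notin_vars: "vars p \<subseteq> {..<k} \<Longrightarrow> eval p (x(k := t)) = eval p x"
  by (rule eval_cong) auto

lemma isCont_eval:
  fixes g :: "nat \<Rightarrow> complex \<Rightarrow> complex"
  assumes "\<And>i. isCont (g i) t0"
  shows "isCont (\<lambda>t. eval p (\<lambda>i. g i t)) t0"
  unfolding eval_def using assms by (auto intro!: continuous_intros)

lemma isCont_fun_upd: "isCont (\<lambda>t. (x(k := t)) i) t0"
  by (cases "i = k") auto

lemma keys_subset_vars: "m \<in> Poly_Mapping.keys p \<Longrightarrow> Poly_Mapping.keys m \<subseteq> vars p"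
  by (auto simp: vars_def)

lemma vars_0 [simp]: "vars 0 = {}"
  by (simp add: vars_def)

lemma vars_1 [simp]: "vars 1 = {}"
  by (simp add: vars_def)

lemma vars_Const [simp]: "vars (Const c) = {}"
  by (simp add: vars_def Const_def)

lemma vars_Var [simp]: "vars (Var i) = {i}"
  by (simp add: vars_def Var_def)

lemma vars_add: "vars (p + q) \<subseteq> vars p \<union> vars q"
  unfolding vars_def using keys_add[of p q] by auto

lemma vars_uminus [simp]: "vars (- p) = vars p"
  unfolding vars_def by simp

lemma vars_diff: "vars (p - q) \<subseteq> vars p \<union> vars q"
  unfolding vars_def using keys_diff[of p q] by auto

lemma vars_mult: "vars (p * q) \<subseteq> vars p \<union> vars q"
proof
  fix i
  assume "i \<in> vars (p * q)"
  then obtain m where m: "m \<in> Poly_Mapping.keys (p * q)" "i \<in> Poly_Mapping.keys m"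
    unfolding vars_def by auto
  from m(1) obtain a b where ab: "m = a + b" "a \<in> Poly_Mapping.keys p" "b \<in> Poly_Mapping.keys q"
    using keys_mult by blast
  have "i \<in> Poly_Mapping.keys a \<union> Poly_Mapping.keys b"
    using m(2) keys_add[of a b] ab(1) by auto
  then show "i \<in> vars p \<union> vars q"
    using ab unfolding vars_def by auto
qed

lemma vars_subset_intros:
  "vars 0 \<subseteq> A" "vars 1 \<subseteq> A" "vars (Const c) \<subseteq> A"
  "i \<in> A \<Longrightarrow> vars (Var i) \<subseteq> A"
  "vars p \<subseteq> A \<Longrightarrow> vars q \<subseteq> A \<Longrightarrow> vars (p + q) \<subseteq> A"
  "vars p \<subseteq> A \<Longrightarrow> vars (- p) \<subseteq> A"
  "vars p \<subseteq> A \<Longrightarrow> vars q \<subseteq> A \<Longrightarrow> vars (p - q) \<subseteq> A"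
  "vars p \<subseteq> A \<Longrightarrow> vars q \<subseteq> A \<Longrightarrow> vars (p * q) \<subseteq> A"
  "vars p \<subseteq> A \<Longrightarrow> vars (p ^ n) \<subseteq> A"
  "(\<And>a. a \<in> S \<Longrightarrow> vars (f a) \<subseteq> A) \<Longrightarrow> vars (sum f S) \<subseteq> A"
  "vars (of_nat n) \<subseteq> A"
proof -
  show pow: "vars p \<subseteq> A \<Longrightarrow> vars (p ^ n) \<subseteq> A" for p n
    by (induction n) (auto dest: subsetD[OF vars_mult])
  show "(\<And>a. a \<in> S \<Longrightarrow> vars (f a) \<subseteq> A) \<Longrightarrow> vars (sum f S) \<subseteq> A"
    by (induction S rule: infinite_finite_induct) (auto dest: subsetD[OF vars_add])
  show "vars (of_nat n) \<subseteq> A"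
    by (metis Const_def vars_Const single_of_nat empty_subsetI)
qed (auto dest: subsetD[OF vars_add] subsetD[OF vars_diff] subsetD[OF vars_mult])

section \<open>Polynomials of bounded degree in the last variable\<close>

definition deg_less :: "nat \<Rightarrow> nat \<Rightarrow> mpoly \<Rightarrow> bool" where
  "deg_less k n p \<longleftrightarrow> (\<exists>c. (\<forall>i. vars (c i) \<subseteq> {..<k}) \<and> p = (\<Sum>i<n. c i * Var k ^ i))"

lemma deg_lessE:
  assumes "deg_less k n p"
  obtains c where "\<And>i. vars (c i) \<subseteq> {..<k}" "p = (\<Sum>i<n. c i * Var k ^ i)"
  using assms unfolding deg_less_def by blast

lemma eval_deg_less_fun_upd:
  assumes "\<And>i. vars (c i) \<subseteq> {..<k}"
  shows "eval (\<Sum>i<n. c i * Var k ^ i) (x(k := t)) = (\<Sum>i<n. eval (c i) x * t ^ i)"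
  using assms by (simp add: eval_fun_upd_notin_vars)

lemma deg_less_0: "deg_less k n 0"
  unfolding deg_less_def by (rule exI[of _ "\<lambda>_. 0"]) simp

lemma deg_less_add:
  assumes "deg_less k n p" "deg_less k n q"
  shows "deg_less k n (p + q)"
proof -
  obtain c where c: "\<And>i. vars (c i) \<subseteq> {..<k}" "p = (\<Sum>i<n. c i * Var k ^ i)"
    using assms(1) by (blast elim: deg_lessE)
  obtain d where d: "\<And>i. vars (d i) \<subseteq> {..<k}" "q = (\<Sum>i<n. d i * Var k ^ i)"
    using assms(2) by (blast elim: deg_lessE)
  show ?thesis
    unfolding deg_less_def
    by (intro exI[of _ "\<lambda>i. c i + d i"] conjI allI vars_subset_intros c(1) d(1))
      (simp add: c(2) d(2) distrib_right sum.distrib)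
qed

lemma deg_less_mult_left:
  assumes "vars q \<subseteq> {..<k}" "deg_less k n p"
  shows "deg_less k n (q * p)"
proof -
  obtain c where c: "\<And>i. vars (c i) \<subseteq> {..<k}" "p = (\<Sum>i<n. c i * Var k ^ i)"
    using assms(2) by (blast elim: deg_lessE)
  show ?thesis
    unfolding deg_less_def
    by (intro exI[of _ "\<lambda>i. q * c i"] conjI allI vars_subset_intros assms(1) c(1))
      (simp add: c(2) sum_distrib_left mult.assoc)
qed

lemma deg_less_diff: "deg_less k n p \<Longrightarrow> deg_less k n q \<Longrightarrow> deg_less k n (p - q)"
  using deg_less_add[of k n p "- 1 * q"] deg_less_mult_left[of "- 1"]
  by (simp add: vars_subset_intros)

lemma deg_less_sum: "(\<And>a. a \<in> S \<Longrightarrow> deg_less k n (f a)) \<Longrightarrow> deg_less k n (sum f S)"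
  by (induction S rule: infinite_finite_induct) (auto intro: deg_less_0 deg_less_add)

lemma deg_less_monomial:
  assumes "vars q \<subseteq> {..<k}" "i < n"
  shows "deg_less k n (q * Var k ^ i)"
  unfolding deg_less_def
proof (intro exI conjI allI)
  show "vars (if j = i then q else 0) \<subseteq> {..<k}" for j
    using assms by simp
  have "(\<Sum>j<n. (if j = i then q else 0) * Var k ^ j) = (\<Sum>j<n. if j = i then q * Var k ^ j else 0)"
    by (rule sum.cong) auto
  then show "q * Var k ^ i = (\<Sum>j<n. (if j = i then q else 0) * Var k ^ j)"
    using assms(2) by (simp add: sum.delta')
qed

lemma deg_less_mult_Var: "vars q \<subseteq> {..<k} \<Longrightarrow> 1 < n \<Longrightarrow> deg_less k n (q * Var k)"
  using deg_less_monomial[of q k 1 n] by simp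

lemma deg_less_const: "vars q \<subseteq> {..<k} \<Longrightarrow> 0 < n \<Longrightarrow> deg_less k n q"
  using deg_less_monomial[of q k 0 n] by simp

lemma deg_less_mono: "deg_less k n p \<Longrightarrow> n \<le> n' \<Longrightarrow> deg_less k n' p"
  by (elim deg_lessE) (auto intro!: deg_less_sum deg_less_monomial)

lemma deg_less_mult_Var_power: "deg_less k n p \<Longrightarrow> deg_less k (n + e) (p * Var k ^ e)"
  by (elim deg_lessE)
    (auto intro!: deg_less_sum deg_less_monomial simp: sum_distrib_right mult.assoc simp flip: power_add)

lemma deg_less_1_vars: "deg_less k 1 p \<Longrightarrow> vars p \<subseteq> {..<k}"
  by (elim deg_lessE) simp

lemma Var_power: "Var i ^ e = Poly_Mapping.single (Poly_Mapping.single i e) 1"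
  by (induction e) (auto simp: Var_def mult_single single_add[symmetric] add.commute)

lemma deg_less_single:
  assumes "Poly_Mapping.keys m \<subseteq> {..<Suc k}"
  shows "deg_less k (Suc (Poly_Mapping.lookup m k)) (Poly_Mapping.single m c)"
proof -
  let ?m' = "Poly_Mapping.update k 0 m"
  have "m = ?m' + Poly_Mapping.single k (Poly_Mapping.lookup m k)"
    by (rule poly_mapping_eqI) (auto simp: lookup_add lookup_update lookup_single when_def)
  then have "Poly_Mapping.single m c = Poly_Mapping.single ?m' c * Var k ^ Poly_Mapping.lookup m k"
    by (metis Var_power mult_single mult_1_right)
  moreover have "vars (Poly_Mapping.single ?m' c) \<subseteq> {..<k}"
    using assms by (auto simp: vars_def keys_update in_keys_iff lookup_update split: if_splits)
  ultimately show ?thesis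
    by (auto intro: deg_less_monomial)
qed

lemma deg_less_exists: "vars p \<subseteq> {..<Suc k} \<Longrightarrow> \<exists>n. deg_less k n p"
proof -
  assume vars: "vars p \<subseteq> {..<Suc k}"
  define n where "n = Suc (Max ((\<lambda>m. Poly_Mapping.lookup m k) ` Poly_Mapping.keys p))"
  have "deg_less k n p"
  proof (subst poly_mapping_eq_sum_single, rule deg_less_sum)
    fix m
    assume m: "m \<in> Poly_Mapping.keys p"
    then have "Poly_Mapping.keys m \<subseteq> {..<Suc k}"
      using vars keys_subset_vars by blast
    moreover have "Suc (Poly_Mapping.lookup m k) \<le> n"
      unfolding n_def using m by auto
    ultimately show "deg_less k n (Poly_Mapping.single m (Poly_Mapping.lookup p m))"
      using deg_less_single deg_less_mono by blast
  qed
  then show ?thesis ..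
qed

lemma deg_less_division:
  assumes L: "deg_less k n L" and p: "deg_less k N p"
  shows "\<exists>Q. vars Q \<subseteq> {..<Suc k} \<and> deg_less k n (p - Q * (Var k ^ n + L))"
  using p
proof (induction N arbitrary: p)
  case 0
  then show ?case
    using deg_less_mono[of k 0 p n] by (intro exI[of _ 0]) simp
next
  case (Suc N p)
  show ?case
  proof (cases "Suc N \<le> n")
    case True
    then show ?thesis
      using Suc.prems deg_less_mono[of k "Suc N" p n] by (intro exI[of _ 0]) simp
  next
    case False
    obtain c where c: "\<And>i. vars (c i) \<subseteq> {..<k}" "p = (\<Sum>i<Suc N. c i * Var k ^ i)"
      using Suc.prems by (blast elim: deg_lessE)
    define e where "e = N - n"
    have N: "N = n + e"
      using False by (simp add: e_def)
    define p' where "p' = (\<Sum>i<N. c i * Var k ^ i) - c N * (L * Var k ^ e)"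
    have "deg_less k N p'"
      unfolding p'_def N using c(1)
      by (intro deg_less_diff deg_less_mult_left deg_less_mult_Var_power L deg_less_sum
          deg_less_monomial) auto
    then obtain Q' where Q': "vars Q' \<subseteq> {..<Suc k}" "deg_less k n (p' - Q' * (Var k ^ n + L))"
      using Suc.IH by blast
    define Q where "Q = Q' + c N * Var k ^ e"
    have "p - Q * (Var k ^ n + L) = p' - Q' * (Var k ^ n + L)"
      unfolding Q_def c(2) p'_def using N by (simp add: algebra_simps power_add)
    moreover have "vars Q \<subseteq> {..<Suc k}"
      unfolding Q_def using Q'(1) c(1)[of N] by (intro vars_subset_intros) auto
    ultimately show ?thesis
      using Q'(2) by auto
  qed
qed

lemma division_by_monic_in_Var:
  assumes "deg_less k n L" "vars p \<subseteq> {..<Suc k}"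
  shows "\<exists>Q. vars Q \<subseteq> {..<Suc k} \<and> deg_less k n (p - Q * (Var k ^ n + L))"
  using deg_less_exists[OF assms(2)] deg_less_division[OF assms(1)] by blast

section \<open>Vanishing of polynomials\<close>

lemma poly_eq_0_if_eval_eq_0:
  fixes p :: mpoly
  assumes "vars p \<subseteq> {..<k}" "\<And>x :: nat \<Rightarrow> 'a :: real_normed_field. eval p x = 0"
  shows "p = 0"
  using assms
proof (induction k arbitrary: p)
  case 0
  have "p = Const (Poly_Mapping.lookup p 0)"
  proof (rule poly_mapping_eqI)
    fix m
    have "m \<in> Poly_Mapping.keys p \<Longrightarrow> m = 0"
      using keys_subset_vars[of m p] 0(1) by auto
    then show "Poly_Mapping.lookup p m = Poly_Mapping.lookup (Const (Poly_Mapping.lookup p 0)) m"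
      by (cases "m = 0") (auto simp: Const_def in_keys_iff lookup_single)
  qed
  moreover have "eval p (\<lambda>_. 0 :: 'a) = 0"
    by (rule 0(2))
  ultimately show ?case
    by (metis Const_def eval_Const of_real_eq_0_iff single_zero)
next
  case (Suc k p)
  obtain N where "deg_less k N p"
    using deg_less_exists Suc.prems(1) by blast
  then have "deg_less k (Suc N) p"
    by (rule deg_less_mono) simp
  then obtain c where c: "\<And>i. vars (c i) \<subseteq> {..<k}" "p = (\<Sum>i<Suc N. c i * Var k ^ i)"
    by (blast elim: deg_lessE)
  have "c i = 0" if "i \<le> N" for i
  proof (rule Suc.IH[OF c(1)])
    fix x :: "nat \<Rightarrow> 'a"
    have "(\<Sum>i<Suc N. eval (c i) x * t ^ i) = 0" for t
      using Suc.prems(2)[of "x(k := t)"] unfolding c(2) eval_deg_less_fun_upd[OF c(1)] .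
    then have "\<forall>t. (\<Sum>i\<le>N. eval (c i) x * t ^ i) = 0"
      by (simp add: lessThan_Suc_atMost)
    then have "\<forall>i\<le>N. eval (c i) x = 0"
      by (simp only: polyfun_eq_0)
    then show "eval (c i) x = 0"
      using that by blast
  qed
  then show ?case
    unfolding c(2) by (simp add: lessThan_Suc_atMost)
qed

lemma dvd_if_vanishes_on_hyperplane:
  assumes vars: "vars p \<subseteq> {..<Suc k}"
    and zero: "\<And>x :: nat \<Rightarrow> real. (\<Sum>i<Suc k. x i) = 1 \<Longrightarrow> eval p x = 0"
  shows "\<exists>Q. p = Q * ((\<Sum>i<Suc k. Var i) - 1)"
proof -
  have hyperplane: "(\<Sum>i<Suc k. Var i) - 1 = Var k ^ 1 + ((\<Sum>i<k. Var i) - 1)"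
    by simp
  have "deg_less k 1 ((\<Sum>i<k. Var i) - 1)"
    by (intro deg_less_const vars_subset_intros) auto
  then obtain Q where Q: "deg_less k 1 (p - Q * ((\<Sum>i<Suc k. Var i) - 1))"
    unfolding hyperplane using division_by_monic_in_Var vars by blast
  define r where "r = p - Q * ((\<Sum>i<Suc k. Var i) - 1)"
  have r_vars: "vars r \<subseteq> {..<k}"
    using Q unfolding r_def by (rule deg_less_1_vars)
  have "eval r w = 0" for w :: "nat \<Rightarrow> real"
  proof -
    let ?x = "w(k := 1 - (\<Sum>i<k. w i))"
    have "(\<Sum>i<Suc k. ?x i) = 1"
      by simp
    then have "eval r ?x = 0"
      unfolding r_def using zero by simp
    then show ?thesis
      using r_vars by (simp only: eval_fun_upd_notin_vars)
  qed
  with r_vars have "r = 0"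
    by (rule poly_eq_0_if_eval_eq_0)
  then show ?thesis
    unfolding r_def by auto
qed

lemma isCont_eq_const_off_finite:
  fixes f :: "'a :: {perfect_space, t2_space} \<Rightarrow> 'b :: t2_space"
  assumes "isCont f t" "finite B" "\<And>s. s \<notin> B \<Longrightarrow> f s = c"
  shows "f t = c"
proof -
  have "eventually (\<lambda>s. \<forall>b\<in>B. s \<noteq> b) (at t)"
    using assms(2) by (simp add: eventually_ball_finite_distrib eventually_neq_at_within)
  then have "eventually (\<lambda>s. f s = c) (at t)"
    by (rule eventually_mono) (use assms(3) in blast)
  with assms(1) have "((\<lambda>_. c) \<longlongrightarrow> f t) (at t)"
    unfolding isCont_def by (simp add: tendsto_cong)
  then show ?thesis
    by (auto dest: LIM_const_eq)
qed

lemma coeffs_eq_0_if_distinct_roots: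
  fixes c :: "nat \<Rightarrow> 'a :: {idom, real_normed_div_algebra}"
  assumes inj: "inj_on v {..<n}" and roots: "\<And>j. j < n \<Longrightarrow> (\<Sum>i<n. c i * v j ^ i) = 0"
    and "i < n"
  shows "c i = 0"
proof (rule ccontr)
  assume "c i \<noteq> 0"
  obtain n' where n': "n = Suc n'"
    using \<open>i < n\<close> by (cases n) auto
  let ?roots = "{z. (\<Sum>i\<le>n'. c i * z ^ i) = 0}"
  have "i \<le> n'"
    using \<open>i < n\<close> n' by simp
  then have "finite ?roots" "card ?roots \<le> n'"
    using polyfun_roots_finite[of c i n'] polyfun_roots_card[of c i n'] \<open>c i \<noteq> 0\<close> by simp_all
  moreover have "v ` {..<n} \<subseteq> ?roots"
    using roots unfolding n' lessThan_Suc_atMost by auto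
  ultimately have "card (v ` {..<n}) \<le> n'"
    by (meson card_mono le_trans)
  then show False
    using card_image[OF inj] n' by simp
qed

section \<open>The cyclic group action\<close>

definition zeta :: "nat \<Rightarrow> complex" where
  "zeta n = cis (2 * pi / real n)"

definition act :: "nat \<Rightarrow> (nat \<Rightarrow> nat) \<Rightarrow> nat \<Rightarrow> (nat \<Rightarrow> complex) \<Rightarrow> nat \<Rightarrow> complex" where
  "act n a j x = (\<lambda>i. zeta n ^ (j * a i) * x i)"

lemma invariant_iff_act: "invariant n a p \<longleftrightarrow> (\<forall>j x. eval p (act n a j x) = eval p x)"
  by (simp add: invariant_def act_def zeta_def)

lemma zeta_neq_0 [simp]: "zeta n \<noteq> 0"
  by (simp add: zeta_def)

lemma zeta_power_self [simp]: "0 < n \<Longrightarrow> zeta n ^ n = 1"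
  by (simp add: zeta_def DeMoivre)

lemma zeta_power_mult_self [simp]: "0 < n \<Longrightarrow> zeta n ^ (j * n) = 1"
  by (simp add: mult.commute[of j] power_mult)

lemma zeta_power_power_self [simp]: "0 < n \<Longrightarrow> (zeta n ^ j) ^ n = 1"
  by (simp flip: power_mult)

lemma zeta_power_mod: "0 < n \<Longrightarrow> zeta n ^ (i mod n) = zeta n ^ i"
  by (metis div_mult_mod_eq mult_1 power_add zeta_power_mult_self)

lemma zeta_power_eq_iff:
  assumes "0 < n"
  shows "zeta n ^ i = zeta n ^ l \<longleftrightarrow> i mod n = l mod n"
proof -
  have "inj_on (\<lambda>j. zeta n ^ j) {..<n}"
    using bij_betw_roots_unity[OF assms] unfolding bij_betw_def
    by (simp add: zeta_def DeMoivre mult.commute)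
  then show ?thesis
    using assms by (metis zeta_power_mod inj_on_eq_iff lessThan_iff mod_less_divisor)
qed

lemma inj_on_zeta_power_mult:
  assumes "0 < n" "coprime b n"
  shows "inj_on (\<lambda>j. zeta n ^ (j * b)) {..<n}"
proof
  fix j l
  assume "j \<in> {..<n}" "l \<in> {..<n}" "zeta n ^ (j * b) = zeta n ^ (l * b)"
  then show "j = l"
    using assms cong_mult_rcancel_nat[of b n j l]
    by (simp add: zeta_power_eq_iff cong_def)
qed

text \<open>The \<open>X\<^sub>k\<close>-coordinate of the point above \<open>(w\<^sub>0, \<dots>, w\<^sub>k\<^sub>-\<^sub>1)\<close> whose image under the
  \<open>j\<close>-th group element lies on the hyperplane \<open>x\<^sub>0 + \<dots> + x\<^sub>k = 1\<close>.\<close>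

definition hyperplane_point :: "nat \<Rightarrow> (nat \<Rightarrow> nat) \<Rightarrow> nat \<Rightarrow> (nat \<Rightarrow> complex) \<Rightarrow> nat \<Rightarrow> complex" where
  "hyperplane_point n a k w j = (1 - (\<Sum>i<k. zeta n ^ (j * a i) * w i)) / zeta n ^ (j * a k)"

lemma sum_act_hyperplane_point:
  "(\<Sum>i<Suc k. act n a j (w(k := hyperplane_point n a k w j)) i) = 1"
  by (simp add: act_def hyperplane_point_def)

lemma inj_on_hyperplane_point_unit_weights:
  assumes "0 < n"
  shows "inj_on (hyperplane_point n (\<lambda>_. 1) k w) {..<n}"
proof -
  have "hyperplane_point n (\<lambda>_. 1) k w j = 1 / zeta n ^ j - (\<Sum>i<k. w i)" for j
    by (simp add: hyperplane_point_def diff_divide_distrib flip: sum_distrib_left)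
  then show ?thesis
    using inj_on_zeta_power_mult[OF assms, of 1] by (simp add: inj_on_def)
qed

lemma finite_not_inj_on_affine:
  fixes \<alpha> \<beta> :: "nat \<Rightarrow> 'a :: field"
  assumes "inj_on \<beta> A" "finite A"
  shows "finite {t. \<not> inj_on (\<lambda>j. \<alpha> j - \<beta> j * t) A}"
proof (rule finite_subset)
  show "{t. \<not> inj_on (\<lambda>j. \<alpha> j - \<beta> j * t) A} \<subseteq> (\<lambda>(j, l). (\<alpha> l - \<alpha> j) / (\<beta> l - \<beta> j)) ` (A \<times> A)"
  proof
    fix t
    assume "t \<in> {t. \<not> inj_on (\<lambda>j. \<alpha> j - \<beta> j * t) A}"
    then obtain j l where jl: "j \<in> A" "l \<in> A" "j \<noteq> l" "\<alpha> j - \<beta> j * t = \<alpha> l - \<beta> l * t"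
      unfolding inj_on_def by auto
    then have "\<beta> l - \<beta> j \<noteq> 0"
      using assms(1) by (auto dest: inj_onD)
    with jl(4) have "t = (\<alpha> l - \<alpha> j) / (\<beta> l - \<beta> j)"
      by (simp add: field_simps)
    with jl show "t \<in> (\<lambda>(j, l). (\<alpha> l - \<alpha> j) / (\<beta> l - \<beta> j)) ` (A \<times> A)"
      by auto
  qed
qed (use assms(2) in simp)

lemma finite_not_inj_on_hyperplane_point:
  assumes "0 < n" "a k \<le> a (Suc k)" "coprime (a (Suc k) - a k) n"
  shows "finite {t. \<not> inj_on (hyperplane_point n a (Suc k) (w(k := t))) {..<n}}"
proof -
  define \<alpha> where "\<alpha> j = (1 - (\<Sum>i<k. zeta n ^ (j * a i) * w i)) / zeta n ^ (j * a (Suc k))" for j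
  define \<beta> where "\<beta> j = 1 / zeta n ^ (j * (a (Suc k) - a k))" for j
  have "hyperplane_point n a (Suc k) (w(k := t)) = (\<lambda>j. \<alpha> j - \<beta> j * t)" for t
  proof
    fix j
    have "zeta n ^ (j * a (Suc k)) = zeta n ^ (j * (a (Suc k) - a k)) * zeta n ^ (j * a k)"
      using assms(2) by (simp flip: power_add add_mult_distrib2)
    then show "hyperplane_point n a (Suc k) (w(k := t)) j = \<alpha> j - \<beta> j * t"
      by (simp add: hyperplane_point_def \<alpha>_def \<beta>_def field_simps)
  qed
  moreover have "inj_on \<beta> {..<n}"
    using inj_on_zeta_power_mult[OF assms(1,3)] by (simp add: \<beta>_def inj_on_def)
  ultimately show ?thesis
    using finite_not_inj_on_affine[of \<beta> "{..<n}" \<alpha>] by simp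
qed

section \<open>The decomposition\<close>

lemma deg_less_eq_0_if_vanishes_at_hyperplane_points:
  assumes R: "deg_less k n R"
    and zero: "\<And>w j. eval R (w(k := hyperplane_point n a k w j)) = 0"
    and generic: "\<And>w. finite {t. \<not> inj_on (hyperplane_point n a k (w(p := t))) {..<n}}"
  shows "R = 0"
proof -
  obtain c where c: "\<And>i. vars (c i) \<subseteq> {..<k}" "R = (\<Sum>i<n. c i * Var k ^ i)"
    using R by (blast elim: deg_lessE)
  have "c i = 0" if "i < n" for i
  proof (rule poly_eq_0_if_eval_eq_0[where 'a = complex, OF c(1)])
    fix w :: "nat \<Rightarrow> complex"
    have off: "eval (c i) (w(p := t)) = 0"
      if "t \<notin> {t. \<not> inj_on (hyperplane_point n a k (w(p := t))) {..<n}}" for t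
    proof (rule coeffs_eq_0_if_distinct_roots[where c = "\<lambda>i. eval (c i) (w(p := t))"])
      show "inj_on (hyperplane_point n a k (w(p := t))) {..<n}"
        using that by simp
      show "(\<Sum>i<n. eval (c i) (w(p := t)) * hyperplane_point n a k (w(p := t)) j ^ i) = 0"
        if "j < n" for j
        using zero[of "w(p := t)" j] unfolding c(2) eval_deg_less_fun_upd[OF c(1)] .
    qed fact
    have "isCont (\<lambda>t. eval (c i) (w(p := t))) (w p)"
      by (intro isCont_eval isCont_fun_upd)
    then have "eval (c i) (w(p := w p)) = 0"
      by (rule isCont_eq_const_off_finite[OF _ generic off])
    then show "eval (c i) w = 0"
      by simp
  qed
  then show ?thesis
    unfolding c(2) by simp
qed

lemma invariant_factor_of_monic:
  assumes QP: "invariant n a (Q * P)" and P: "invariant n a P"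
    and monic: "P = Var k ^ m + L" "deg_less k m L"
  shows "invariant n a Q"
  unfolding invariant_iff_act
proof (intro allI)
  fix j and x :: "nat \<Rightarrow> complex"
  obtain l where l: "\<And>i. vars (l i) \<subseteq> {..<k}" "L = (\<Sum>i<m. l i * Var k ^ i)"
    using monic(2) by (blast elim: deg_lessE)
  define coeff where "coeff i = (if i = m then 1 else eval (l i) x)" for i
  have "eval P (x(k := t)) = (\<Sum>i\<le>m. coeff i * t ^ i)" for t
    by (simp add: monic(1) l(2) eval_deg_less_fun_upd[OF l(1)] coeff_def
        flip: eval_sum lessThan_Suc_atMost)
  then have finite_roots: "finite {t. eval P (x(k := t)) = 0}"
    using polyfun_roots_finite[of coeff m m] by (simp add: coeff_def)
  have off: "eval Q (act n a j (x(k := t))) - eval Q (x(k := t)) = 0"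
    if "t \<notin> {t. eval P (x(k := t)) = 0}" for t
  proof -
    have "eval Q (act n a j (x(k := t))) * eval P (x(k := t)) = eval Q (x(k := t)) * eval P (x(k := t))"
      using QP P unfolding invariant_iff_act by (metis eval_mult)
    then show ?thesis
      using that by simp
  qed
  have "isCont (\<lambda>t. eval Q (act n a j (x(k := t))) - eval Q (x(k := t))) (x k)"
    unfolding act_def by (intro continuous_intros isCont_eval isCont_fun_upd)
  then have "eval Q (act n a j (x(k := x k))) - eval Q (x(k := x k)) = 0"
    by (rule isCont_eq_const_off_finite[OF _ finite_roots off])
  then show "eval Q (act n a j x) = eval Q x"
    by simp
qed

lemma eval_eq_1_on_hyperplane_if_real:
  fixes x :: "nat \<Rightarrow> 'a :: {real_algebra_1, comm_ring_1}"
  assumes vars: "vars G \<subseteq> {..<Suc k}"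
    and G_one: "\<And>x :: nat \<Rightarrow> real. (\<Sum>i<Suc k. x i) = 1 \<Longrightarrow> eval G x = 1"
    and x: "(\<Sum>i<Suc k. x i) = 1"
  shows "eval G x = 1"
proof -
  have "vars (G - 1) \<subseteq> {..<Suc k}"
    using vars by (intro vars_subset_intros)
  moreover have "eval (G - 1) y = 0" if "(\<Sum>i<Suc k. y i) = 1" for y :: "nat \<Rightarrow> real"
    using G_one[OF that] by simp
  ultimately obtain Q where "G - 1 = Q * ((\<Sum>i<Suc k. Var i) - 1)"
    using dvd_if_vanishes_on_hyperplane by blast
  then have "eval (G - 1) x = eval Q x * ((\<Sum>i<Suc k. x i) - 1)"
    by (simp only: eval_mult eval_diff eval_sum eval_Var eval_1)
  then show ?thesis
    using x by simp
qed

lemma eval_at_hyperplane_point_eq_1: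
  assumes "invariant n a P" "\<And>x :: nat \<Rightarrow> complex. (\<Sum>i<Suc k. x i) = 1 \<Longrightarrow> eval P x = 1"
  shows "eval P (w(k := hyperplane_point n a k w j)) = 1"
  using assms(2)[OF sum_act_hyperplane_point[of n a j]] assms(1)
  unfolding invariant_iff_act by simp

theorem decomposition_of_invariant:
  fixes Phi L G :: mpoly
  assumes Phi: "Phi = 1 + Var k ^ n + L" "deg_less k n L" "invariant n a Phi"
    and Phi_one: "\<And>x :: nat \<Rightarrow> complex. (\<Sum>i<Suc k. x i) = 1 \<Longrightarrow> eval Phi x = 1"
    and generic: "\<And>w. finite {t. \<not> inj_on (hyperplane_point n a k (w(p := t))) {..<n}}"
    and G: "vars G \<subseteq> {..<Suc k}" "invariant n a G"
    and G_one: "\<And>x :: nat \<Rightarrow> real. (\<Sum>i<Suc k. x i) = 1 \<Longrightarrow> eval G x = 1"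
  shows "\<exists>H. vars H \<subseteq> {..<Suc k} \<and> invariant n a H \<and> G = Phi - H + H * Phi"
proof -
  have "vars (G - 1) \<subseteq> {..<Suc k}"
    using G(1) by (intro vars_subset_intros)
  then obtain Q where Q: "vars Q \<subseteq> {..<Suc k}" "deg_less k n (G - 1 - Q * (Var k ^ n + L))"
    using division_by_monic_in_Var[OF Phi(2)] by blast
  have "G - 1 - Q * (Phi - 1) = 0"
  proof (rule deg_less_eq_0_if_vanishes_at_hyperplane_points[OF _ _ generic])
    show "deg_less k n (G - 1 - Q * (Phi - 1))"
      using Q(2) by (simp add: Phi(1))
    show "eval (G - 1 - Q * (Phi - 1)) (w(k := hyperplane_point n a k w j)) = 0" for w j
      using eval_at_hyperplane_point_eq_1[OF Phi(3) Phi_one]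
        eval_at_hyperplane_point_eq_1[OF G(2) eval_eq_1_on_hyperplane_if_real[OF G(1) G_one]]
      by simp
  qed
  then have G_eq: "G = 1 + Q * (Phi - 1)"
    by (simp add: algebra_simps)
  have "invariant n a (Q * (Var k ^ n + L))"
    using G(2) G_eq Phi(1) unfolding invariant_iff_act by simp
  moreover have "invariant n a (Var k ^ n + L)"
    using Phi(1,3) unfolding invariant_iff_act by simp
  ultimately have "invariant n a Q"
    using invariant_factor_of_monic Phi(2) by blast
  moreover have "vars (Q - 1) \<subseteq> {..<Suc k}"
    using Q(1) by (intro vars_subset_intros)
  ultimately show ?thesis
    using G_eq by (intro exI[of _ "Q - 1"]) (simp add: invariant_iff_act algebra_simps)
qed

section \<open>The four cases\<close>

lemma decomposition_power_of_sum:
  assumes m: "0 < m" and G: "special (Suc k) m (\<lambda>_. 1) G"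
  shows "\<exists>H. vars H \<subseteq> {..<Suc k} \<and> invariant m (\<lambda>_. 1) H \<and>
    G = (\<Sum>i<Suc k. Var i) ^ m - H + H * (\<Sum>i<Suc k. Var i) ^ m"
proof (rule decomposition_of_invariant)
  define S where "S = (\<Sum>i<k. Var i)"
  define L where "L = (\<Sum>i<m. (of_nat (m choose i) * S ^ (m - i)) * Var k ^ i) - (1 :: mpoly)"
  have "(\<Sum>i<Suc k. Var i) ^ m = (Var k + S) ^ m"
    by (simp add: S_def add.commute)
  also have "\<dots> = 1 + Var k ^ m + L"
    unfolding binomial_ring L_def by (simp add: lessThan_Suc_atMost[symmetric] mult_ac)
  finally show "(\<Sum>i<Suc k. Var i) ^ m = 1 + Var k ^ m + L" .
  show "deg_less k m L"
    unfolding L_def S_def using m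
    by (intro deg_less_diff deg_less_sum deg_less_monomial deg_less_const vars_subset_intros) auto
  show "invariant m (\<lambda>_. 1) ((\<Sum>i<Suc k. Var i) ^ m)"
    using m by (simp add: invariant_iff_act act_def power_mult_distrib flip: sum_distrib_left distrib_left)
  show "eval ((\<Sum>i<Suc k. Var i) ^ m) x = 1" if "(\<Sum>i<Suc k. x i) = 1" for x :: "nat \<Rightarrow> complex"
    using that by simp
  show "finite {t. \<not> inj_on (hyperplane_point m (\<lambda>_. 1) k (w(0 := t))) {..<m}}" for w
    using inj_on_hyperplane_point_unit_weights[OF m] by simp
qed (use G in \<open>auto simp: special_def\<close>)

text \<open>The Fibonacci polynomials: \<open>fib_poly m (a + b) (- a b) = a\<^sup>m + a\<^sup>m\<^sup>-\<^sup>1 b + \<dots> + b\<^sup>m\<close>.\<close>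

definition fib_poly :: "nat \<Rightarrow> 'a \<Rightarrow> 'a \<Rightarrow> 'a :: comm_ring_1" where
  "fib_poly m s q = (\<Sum>j\<le>m. of_nat ((m - j) choose j) * q ^ j * s ^ (m - 2 * j))"

lemma fib_poly_0 [simp]: "fib_poly 0 s q = 1"
  by (simp add: fib_poly_def)

lemma fib_poly_1 [simp]: "fib_poly (Suc 0) s q = s"
  by (simp add: fib_poly_def)

lemma fib_poly_Suc_Suc: "fib_poly (Suc (Suc m)) s q = s * fib_poly (Suc m) s q + q * fib_poly m s q"
proof -
  define A where "A = (\<Sum>i\<le>Suc m. of_nat ((m - i) choose i) * q ^ Suc i * s ^ (m - 2 * i))"
  define B where "B = (\<Sum>i\<le>Suc m. of_nat ((m - i) choose Suc i) * q ^ Suc i * s ^ (m - 2 * i))"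
  have pascal: "(Suc m - i) choose Suc i = ((m - i) choose i) + ((m - i) choose Suc i)" if "i \<le> Suc m" for i
    using that by (cases "i \<le> m") (auto simp: Suc_diff_le)
  have "fib_poly (Suc (Suc m)) s q = s ^ Suc (Suc m) +
      (\<Sum>i\<le>Suc m. of_nat ((Suc m - i) choose Suc i) * q ^ Suc i * s ^ (m - 2 * i))"
    unfolding fib_poly_def by (subst sum.atMost_Suc_shift) simp
  also have "\<dots> = s ^ Suc (Suc m) + A + B"
    unfolding A_def B_def add.assoc sum.distrib[symmetric]
    by (intro arg_cong2[where f = "(+)"] refl sum.cong) (simp_all add: pascal distrib_right)
  finally have fib_Suc_Suc: "fib_poly (Suc (Suc m)) s q = s ^ Suc (Suc m) + A + B" .
  have "A = q * fib_poly m s q"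
    unfolding A_def fib_poly_def sum_distrib_left by (simp add: mult_ac)
  moreover have "s * fib_poly (Suc m) s q = s ^ Suc (Suc m) + B"
  proof -
    have "s * s ^ (Suc m - 2 * Suc i) = s ^ (m - 2 * i)" if "Suc i \<le> m - i" for i
    proof -
      have "Suc (Suc m - 2 * Suc i) = m - 2 * i"
        using that by simp
      then show ?thesis
        by (metis power_Suc)
    qed
    then have "(\<Sum>i\<le>m. of_nat ((m - i) choose Suc i) * q ^ Suc i * (s * s ^ (Suc m - 2 * Suc i))) =
        (\<Sum>i\<le>m. of_nat ((m - i) choose Suc i) * q ^ Suc i * s ^ (m - 2 * i))"
      by (intro sum.cong refl) (metis binomial_eq_0 not_less mult_zero_left of_nat_0)
    then show ?thesis
      unfolding fib_poly_def B_def sum_distrib_left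
      by (subst sum.atMost_Suc_shift) (simp add: mult_ac)
  qed
  ultimately show ?thesis
    using fib_Suc_Suc by (simp add: algebra_simps)
qed

lemma power_add_power_eq_fib_poly:
  fixes a b :: "'a :: comm_ring_1"
  shows "a ^ (m + 2) + b ^ (m + 2) =
    fib_poly (m + 2) (a + b) (- (a * b)) - a * b * fib_poly m (a + b) (- (a * b))"
proof (induction m rule: induct_nat_012)
  case 0
  then show ?case
    by (simp add: numeral_2_eq_2 fib_poly_Suc_Suc algebra_simps)
next
  case 1
  then show ?case
    by (simp add: numeral_2_eq_2 numeral_3_eq_3 fib_poly_Suc_Suc algebra_simps)
next
  case (ge2 m)
  have "a ^ (Suc (Suc m) + 2) + b ^ (Suc (Suc m) + 2) =
      (a + b) * (a ^ (Suc m + 2) + b ^ (Suc m + 2)) - a * b * (a ^ (m + 2) + b ^ (m + 2))"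
    by (simp add: algebra_simps)
  then show ?case
    unfolding ge2.IH by (simp add: fib_poly_Suc_Suc algebra_simps)
qed

lemma cc_Suc_eq_binomial_sum:
  assumes "i < r"
  shows "cc r (Suc i) = real ((2 * r - i) choose Suc i) + real ((2 * r - 1 - i) choose i)"
proof -
  let ?B = "real ((2 * r - i) choose Suc i)" and ?C = "real ((2 * r - 1 - i) choose i)"
  have n: "Suc (2 * r - 1 - i) = 2 * r - i" "2 * r - Suc i = 2 * r - 1 - i"
    using assms by simp_all
  have "(2 * r - i) * ((2 * r - 1 - i) choose i) = ((2 * r - i) choose Suc i) * Suc i"
    using Suc_times_binomial_eq[of "2 * r - 1 - i" i] by (simp only: n)
  then have B: "real (2 * r - i) * ?C = ?B * real (Suc i)"
    by (simp only: of_nat_mult[symmetric])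
  have "cc r (Suc i) = (real (2 * r - i) + real (Suc i)) * ?C / real (Suc i)"
    unfolding cc_def n(2) using assms by (simp flip: of_nat_add)
  also have "\<dots> = ?B + ?C"
    unfolding distrib_right B by (simp add: field_simps)
  finally show ?thesis .
qed

lemma fib_poly_eq_sum_half:
  "fib_poly m s q = (\<Sum>j\<le>m div 2. of_nat ((m - j) choose j) * q ^ j * s ^ (m - 2 * j))"
  unfolding fib_poly_def
proof (rule sum.mono_neutral_right)
  show "\<forall>j\<in>{..m} - {..m div 2}. of_nat ((m - j) choose j) * q ^ j * s ^ (m - 2 * j) = 0"
  proof
    fix j
    assume "j \<in> {..m} - {..m div 2}"
    then have "m - j < j"
      by auto
    then show "of_nat ((m - j) choose j) * q ^ j * s ^ (m - 2 * j) = 0"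
      by (simp add: binomial_eq_0)
  qed
qed auto

lemma fib_poly_odd_add:
  fixes s q :: "'a :: {comm_ring_1, real_algebra_1}"
  assumes "1 \<le> r"
  shows "fib_poly (2 * r + 1) s q + q * fib_poly (2 * r - 1) s q =
    s ^ (2 * r + 1) + (\<Sum>j = 1..r. of_real (cc r j) * s ^ (2 * r + 1 - 2 * j) * q ^ j)"
proof -
  let ?T = "\<lambda>i. s ^ (2 * r - 1 - 2 * i) * q ^ Suc i"
  have "fib_poly (2 * r + 1) s q = (\<Sum>j\<le>r. of_nat ((2 * r + 1 - j) choose j) * q ^ j * s ^ (2 * r + 1 - 2 * j))"
    using fib_poly_eq_sum_half[of "2 * r + 1"] by simp
  also have "\<dots> = s ^ (2 * r + 1) + (\<Sum>i<r. of_nat ((2 * r - i) choose Suc i) * ?T i)"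
    by (simp add: sum.atMost_shift mult_ac)
  finally have odd: "fib_poly (2 * r + 1) s q = \<dots>" .
  obtain r' where r': "r = Suc r'"
    using assms by (cases r) auto
  have "fib_poly (2 * r - 1) s q = (\<Sum>i<r. of_nat ((2 * r - 1 - i) choose i) * q ^ i * s ^ (2 * r - 1 - 2 * i))"
    using fib_poly_eq_sum_half[of "2 * r - 1" s q] by (simp add: r' lessThan_Suc_atMost)
  then have odd': "q * fib_poly (2 * r - 1) s q = (\<Sum>i<r. of_nat ((2 * r - 1 - i) choose i) * ?T i)"
    by (simp add: sum_distrib_left mult_ac)
  have "(\<Sum>j = 1..r. of_real (cc r j) * s ^ (2 * r + 1 - 2 * j) * q ^ j) = (\<Sum>i<r. of_real (cc r (Suc i)) * ?T i)"
    by (simp add: sum.atLeast1_atMost_eq mult_ac)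
  also have "\<dots> = (\<Sum>i<r. of_nat ((2 * r - i) choose Suc i) * ?T i + of_nat ((2 * r - 1 - i) choose i) * ?T i)"
    by (intro sum.cong refl) (simp add: cc_Suc_eq_binomial_sum distrib_right)
  finally show ?thesis
    unfolding odd odd' by (simp add: sum.distrib add.assoc)
qed

lemma f_odd_eq_1_on_line:
  fixes x y :: "'a :: {comm_ring_1, real_algebra_1}"
  assumes "1 \<le> r" "x + y = 1"
  shows "x ^ (2 * r + 1) + y ^ (2 * r + 1) + (\<Sum>j = 1..r. of_real (cc r j) * x ^ (2 * r + 1 - 2 * j) * y ^ j) = 1"
proof -
  have r: "2 * r - 1 + 2 = 2 * r + 1"
    using assms(1) by simp
  have ab: "1 + - y = x" "- (1 * - y) = y"
    using assms(2) by (simp_all add: algebra_simps)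
  have "1 - y ^ (2 * r + 1) = fib_poly (2 * r + 1) x y + y * fib_poly (2 * r - 1) x y"
    using power_add_power_eq_fib_poly[where a = 1 and b = "- y" and m = "2 * r - 1"]
    unfolding r ab by simp
  then show ?thesis
    using fib_poly_odd_add[OF assms(1), of x y] by (simp add: algebra_simps)
qed

lemma eval_f_odd:
  "eval (f_odd r) x = x 0 ^ (2 * r + 1) + x 1 ^ (2 * r + 1)
    + (\<Sum>j = 1..r. of_real (cc r j) * x 0 ^ (2 * r + 1 - 2 * j) * x 1 ^ j)"
  by (simp add: f_odd_def)

lemma invariant_f_odd: "invariant (2 * r + 1) (\<lambda>i. i + 1) (f_odd r)"
  unfolding invariant_iff_act
proof (intro allI)
  fix j and x :: "nat \<Rightarrow> complex"
  define u where "u = zeta (2 * r + 1) ^ j"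
  have u: "u ^ (2 * r + 1) = 1"
    unfolding u_def by (rule zeta_power_power_self) simp
  have "zeta (2 * r + 1) ^ (j * (1 + 1)) = u\<^sup>2"
    unfolding u_def by (simp only: one_add_one power_mult)
  then have act: "act (2 * r + 1) (\<lambda>i. i + 1) j x 0 = u * x 0" "act (2 * r + 1) (\<lambda>i. i + 1) j x 1 = u\<^sup>2 * x 1"
    by (simp_all add: act_def u_def)
  have monomial: "c * (u * x 0) ^ (2 * r + 1 - 2 * i) * (u\<^sup>2 * x 1) ^ i = c * x 0 ^ (2 * r + 1 - 2 * i) * x 1 ^ i"
    if "i \<le> r" for c i
  proof -
    have "c * (u * x 0) ^ (2 * r + 1 - 2 * i) * (u\<^sup>2 * x 1) ^ i
        = u ^ (2 * r + 1 - 2 * i + 2 * i) * (c * x 0 ^ (2 * r + 1 - 2 * i) * x 1 ^ i)"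
      by (simp add: power_mult_distrib power_add power_mult[symmetric] mult_ac)
    also have "2 * r + 1 - 2 * i + 2 * i = 2 * r + 1"
      using that by simp
    also note u
    finally show ?thesis
      by simp
  qed
  have sum: "(\<Sum>i = 1..r. of_real (cc r i) * (u * x 0) ^ (2 * r + 1 - 2 * i) * (u\<^sup>2 * x 1) ^ i)
      = (\<Sum>i = 1..r. of_real (cc r i) * x 0 ^ (2 * r + 1 - 2 * i) * x 1 ^ i)"
    by (intro sum.cong refl monomial) simp
  have "(u\<^sup>2) ^ (2 * r + 1) = (u ^ (2 * r + 1))\<^sup>2"
    by (simp only: power_mult[symmetric] mult.commute)
  then have x1: "(u\<^sup>2 * x 1) ^ (2 * r + 1) = x 1 ^ (2 * r + 1)"
    using u by (simp only: power_mult_distrib) simp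
  have x0: "(u * x 0) ^ (2 * r + 1) = x 0 ^ (2 * r + 1)"
    using u by (simp only: power_mult_distrib) simp
  show "eval (f_odd r) (act (2 * r + 1) (\<lambda>i. i + 1) j x) = eval (f_odd r) x"
    by (simp only: eval_f_odd act x0 x1 sum)
qed

lemma decomposition_f_odd:
  assumes r: "1 \<le> r" and G: "special 2 (2 * r + 1) (\<lambda>i. i + 1) G"
  shows "\<exists>H. vars H \<subseteq> {..<2} \<and> invariant (2 * r + 1) (\<lambda>i. i + 1) H \<and> G = f_odd r - H + H * f_odd r"
proof -
  define L where "L = Var 0 ^ (2 * r + 1) - 1 +
    (\<Sum>j = 1..r. (Const (cc r j) * Var 0 ^ (2 * r + 1 - 2 * j)) * Var 1 ^ j)"
  have "\<exists>H. vars H \<subseteq> {..<Suc 1} \<and> invariant (2 * r + 1) (\<lambda>i. i + 1) H \<and> G = f_odd r - H + H * f_odd r"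
  proof (rule decomposition_of_invariant)
    show "f_odd r = 1 + Var 1 ^ (2 * r + 1) + L"
      unfolding L_def f_odd_def by (simp add: algebra_simps)
    show "deg_less 1 (2 * r + 1) L"
      unfolding L_def
      by (intro deg_less_add deg_less_diff deg_less_sum deg_less_monomial deg_less_const
          vars_subset_intros) auto
    show "invariant (2 * r + 1) (\<lambda>i. i + 1) (f_odd r)"
      by (rule invariant_f_odd)
    show "eval (f_odd r) x = 1" if "(\<Sum>i<Suc 1. x i) = 1" for x :: "nat \<Rightarrow> complex"
      unfolding eval_f_odd using f_odd_eq_1_on_line[OF r] that by simp
    show "finite {t. \<not> inj_on (hyperplane_point (2 * r + 1) (\<lambda>i. i + 1) 1 (w(0 := t))) {..<2 * r + 1}}"
      for w
      using finite_not_inj_on_hyperplane_point[of "2 * r + 1" "\<lambda>i. i + 1" 0] by simp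
  qed (use G in \<open>auto simp: special_def numeral_2_eq_2\<close>)
  then show ?thesis
    by (simp add: numeral_2_eq_2)
qed

lemma eval_Klein_F:
  "eval Klein_F x = x 0^7 + x 1^7 + x 2^7
     + 14 * (x 0^3*x 1^2 + x 0^2*x 2^3 + x 1^3*x 2^2 + x 0*x 1*x 2)
     + 7 * (x 0^5*x 1 + x 0*x 2^5 + x 1^5*x 2 + x 0*x 1^3 + x 0^3*x 2 + x 1*x 2^3)
     + 7 * (x 0*x 1^2*x 2^4 + x 0^2*x 1^4*x 2 + x 0^4*x 1*x 2^2 + x 0^2*x 1^2*x 2^2)"
  by (simp add: Klein_F_def Let_def)

lemma Klein_F_eq_1_on_plane:
  fixes x y z :: "'a :: idom"
  assumes "x + y + z = 1"
  shows "x^7 + y^7 + z^7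
     + 14 * (x^3*y^2 + x^2*z^3 + y^3*z^2 + x*y*z)
     + 7 * (x^5*y + x*z^5 + y^5*z + x*y^3 + x^3*z + y*z^3)
     + 7 * (x*y^2*z^4 + x^2*y^4*z + x^4*y*z^2 + x^2*y^2*z^2) = 1"
proof -
  have "z = 1 - x - y"
    using assms by (simp add: algebra_simps)
  then show ?thesis
    by algebra
qed

lemma Klein_F_rotation_invariant:
  fixes x y z u :: "'a :: idom"
  assumes "u^7 = 1"
  shows "(u*x)^7 + (u^2*y)^7 + (u^4*z)^7
     + 14 * ((u*x)^3*(u^2*y)^2 + (u*x)^2*(u^4*z)^3 + (u^2*y)^3*(u^4*z)^2 + (u*x)*(u^2*y)*(u^4*z))
     + 7 * ((u*x)^5*(u^2*y) + (u*x)*(u^4*z)^5 + (u^2*y)^5*(u^4*z) + (u*x)*(u^2*y)^3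
       + (u*x)^3*(u^4*z) + (u^2*y)*(u^4*z)^3)
     + 7 * ((u*x)*(u^2*y)^2*(u^4*z)^4 + (u*x)^2*(u^2*y)^4*(u^4*z) + (u*x)^4*(u^2*y)*(u^4*z)^2
       + (u*x)^2*(u^2*y)^2*(u^4*z)^2)
   = x^7 + y^7 + z^7
     + 14 * (x^3*y^2 + x^2*z^3 + y^3*z^2 + x*y*z)
     + 7 * (x^5*y + x*z^5 + y^5*z + x*y^3 + x^3*z + y*z^3)
     + 7 * (x*y^2*z^4 + x^2*y^4*z + x^4*y*z^2 + x^2*y^2*z^2)"
  using assms by algebra

lemma invariant_Klein_F: "invariant 7 (\<lambda>i. 2 ^ i) Klein_F"
  unfolding invariant_iff_act
proof (intro allI)
  fix j and x :: "nat \<Rightarrow> complex"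
  have "(zeta 7 ^ j) ^ 7 = 1"
    by simp
  then show "eval Klein_F (act 7 (\<lambda>i. 2 ^ i) j x) = eval Klein_F x"
    unfolding eval_Klein_F using Klein_F_rotation_invariant[of "zeta 7 ^ j" "x 0" "x 1" "x 2"]
    by (simp add: act_def power_mult)
qed

lemma decomposition_Klein_F:
  assumes G: "special 3 7 (\<lambda>i. 2 ^ i) G"
  shows "\<exists>H. vars H \<subseteq> {..<3} \<and> invariant 7 (\<lambda>i. 2 ^ i) H \<and> G = Klein_F - H + H * Klein_F"
proof -
  define L where "L = Klein_F - 1 - Var 2 ^ 7"
  have "\<exists>H. vars H \<subseteq> {..<Suc 2} \<and> invariant 7 (\<lambda>i. 2 ^ i) H \<and> G = Klein_F - H + H * Klein_F"
  proof (rule decomposition_of_invariant)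
    show "Klein_F = 1 + Var 2 ^ 7 + L"
      unfolding L_def by simp
    have "L = Var 0 ^ 7 + Var 1 ^ 7 - 1
       + Const 14 * (Var 0^3*Var 1^2 + Var 0^2*Var 2^3 + Var 1^3*Var 2^2 + Var 0*Var 1*Var 2)
       + Const 7 * (Var 0^5*Var 1 + Var 0*Var 2^5 + Var 1^5*Var 2 + Var 0*Var 1^3 + Var 0^3*Var 2
         + Var 1*Var 2^3)
       + Const 7 * (Var 0*Var 1^2*Var 2^4 + Var 0^2*Var 1^4*Var 2 + Var 0^4*Var 1*Var 2^2
         + Var 0^2*Var 1^2*Var 2^2)"
      unfolding L_def Klein_F_def Let_def Const_def by (simp add: algebra_simps)
    then show "deg_less 2 7 L"
      \<comment> \<open>the monomial rules must precede \<open>deg_less_mult_left\<close>, which would split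
        \<open>X\<^sub>0\<^sup>2 X\<^sub>2\<^sup>3\<close> at the wrong factor and make the search backtrack exponentially\<close>
      by (simp only:)
        (intro deg_less_add deg_less_diff deg_less_monomial deg_less_mult_Var deg_less_mult_left
          deg_less_const vars_subset_intros; simp)
    show "invariant 7 (\<lambda>i. 2 ^ i) Klein_F"
      by (rule invariant_Klein_F)
    show "eval Klein_F x = 1" if "(\<Sum>i<Suc 2. x i) = 1" for x :: "nat \<Rightarrow> complex"
      unfolding eval_Klein_F using that by (intro Klein_F_eq_1_on_plane) (simp add: numeral_2_eq_2)
    have "coprime (2 :: nat) 7"
      by (simp add: coprime_iff_gcd_eq_1 gcd_non_0_nat)
    then show "finite {t. \<not> inj_on (hyperplane_point 7 (\<lambda>i. 2 ^ i) 2 (w(1 := t))) {..<7}}" for w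
      using finite_not_inj_on_hyperplane_point[of 7 "\<lambda>i. 2 ^ i" 1] by (simp add: numeral_2_eq_2)
  qed (use G in \<open>auto simp: special_def numeral_3_eq_3\<close>)
  then show ?thesis
    by (simp add: numeral_3_eq_3)
qed

theorem proposition2p1:
  shows
   "(\<forall>m G. m \<ge> 2 \<longrightarrow> special 1 m (\<lambda>_. 1) G \<longrightarrow>
       (\<exists>H. vars H \<subseteq> {..<1} \<and> invariant m (\<lambda>_. 1) H \<and>
            G = Var 0 ^ m - H + H * Var 0 ^ m))
  \<and> (\<forall>m G. m \<ge> 2 \<longrightarrow> special 2 m (\<lambda>_. 1) G \<longrightarrow>
       (\<exists>H. vars H \<subseteq> {..<2} \<and> invariant m (\<lambda>_. 1) H \<and>
            G = (Var 0 + Var 1) ^ m - H + H * (Var 0 + Var 1) ^ m))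
  \<and> (\<forall>r G. r \<ge> 1 \<longrightarrow> special 2 (2*r+1) (\<lambda>i. i + 1) G \<longrightarrow>
       (\<exists>H. vars H \<subseteq> {..<2} \<and> invariant (2*r+1) (\<lambda>i. i + 1) H \<and>
            G = f_odd r - H + H * f_odd r))
  \<and> (\<forall>G. special 3 7 (\<lambda>i. 2 ^ i) G \<longrightarrow>
       (\<exists>H. vars H \<subseteq> {..<3} \<and> invariant 7 (\<lambda>i. 2 ^ i) H \<and>
            G = Klein_F - H + H * Klein_F))"
proof (intro conjI allI impI)
  fix m G
  assume "m \<ge> 2" "special 1 m (\<lambda>_. 1) G"
  then show "\<exists>H. vars H \<subseteq> {..<1} \<and> invariant m (\<lambda>_. 1) H \<and> G = Var 0 ^ m - H + H * Var 0 ^ m"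
    using decomposition_power_of_sum[of m 0 G] by simp
next
  fix m G
  assume "m \<ge> 2" "special 2 m (\<lambda>_. 1) G"
  then show "\<exists>H. vars H \<subseteq> {..<2} \<and> invariant m (\<lambda>_. 1) H \<and>
      G = (Var 0 + Var 1) ^ m - H + H * (Var 0 + Var 1) ^ m"
    using decomposition_power_of_sum[of m 1 G] by (simp add: numeral_2_eq_2)
next
  fix r G
  assume "r \<ge> 1" "special 2 (2*r+1) (\<lambda>i. i + 1) G"
  then show "\<exists>H. vars H \<subseteq> {..<2} \<and> invariant (2*r+1) (\<lambda>i. i + 1) H \<and> G = f_odd r - H + H * f_odd r"
    by (rule decomposition_f_odd)
next
  fix G
  assume "special 3 7 (\<lambda>i. 2 ^ i) G"
  then show "\<exists>H. vars H \<subseteq> {..<3} \<and> invariant 7 (\<lambda>i. 2 ^ i) H \<and> G = Klein_F - H + H * Klein_F"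
    by (rule decomposition_Klein_F)
qed

end
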